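(* Let $R$ be a commutative ring with identity. Then the cozero-divisor graph $\Gamma'(R)$ is planar if and only if $\Gamma''_I(R)$ is planar for every ideal $I$ of $R$.
   Context: $\Gamma'(R)$ is the simple undirected graph whose vertices are the nonzero non-unit elements of $R$, with distinct vertices $x,y$ adjacent if and only if $x\notin yR$ and $y\notin xR$. For an ideal $I$ of $R$, $\Gamma''_I(R)$ is the simple undirected graph whose vertex set is $\{x\in R\setminus I : xR+I\neq R\}$, with distinct vertices $x,y$ adjacent if and only if $x\notin yR+I$ and $y\notin xR+I$. A graph is planar if it can be drawn in the plane with edges meeting only at their endpoints. *)

theory Defs
  imports "HOL-Analysis.Analysis"
begin

text \<open>Simple undirected graphs: a vertex set V and an edge relation E
  (assumed symmetric and irreflexive on V by construction below).\<close>

text \<open>Vertices go injectively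
  to points; each edge {x,y} is drawn as an arc from the point of x to the point
  of y (the drawing of an unordered edge is chosen once: the arc for (y,x)
  is the reverse of that for (x,y)); an arc meets no vertex point other than
  its endpoints; and arcs of distinct edges meet only at common endpoints.\<close>

definition planar :: "'a set \<Rightarrow> ('a \<Rightarrow> 'a \<Rightarrow> bool) \<Rightarrow> bool" where
  "planar V E \<longleftrightarrow>
    (\<exists>(p :: 'a \<Rightarrow> real^2) (\<gamma> :: 'a \<Rightarrow> 'a \<Rightarrow> real \<Rightarrow> real^2).
       inj_on p V \<and>
       (\<forall>x\<in>V. \<forall>y\<in>V. E x y \<longrightarrow>
          arc (\<gamma> x y) \<and> pathstart (\<gamma> x y) = p x \<and> pathfinish (\<gamma> x y) = p y \<and>
          \<gamma> y x = reversepath (\<gamma> x y) \<and>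
          path_image (\<gamma> x y) \<inter> p ` V \<subseteq> {p x, p y}) \<and>
       (\<forall>x\<in>V. \<forall>y\<in>V. \<forall>u\<in>V. \<forall>v\<in>V. E x y \<and> E u v \<and> {x, y} \<noteq> {u, v} \<longrightarrow>
          path_image (\<gamma> x y) \<inter> path_image (\<gamma> u v) \<subseteq> p ` ({x, y} \<inter> {u, v})))"

definition is_ideal :: "'r::comm_ring_1 set \<Rightarrow> bool" where
  "is_ideal I \<longleftrightarrow> 0 \<in> I \<and> (\<forall>a\<in>I. \<forall>b\<in>I. a + b \<in> I) \<and> (\<forall>a\<in>I. - a \<in> I)
      \<and> (\<forall>a\<in>I. \<forall>r. r * a \<in> I)"

definition pideal :: "'r::comm_ring_1 \<Rightarrow> 'r set" where
  "pideal x = {x * r | r. True}"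

definition pideal_plus :: "'r::comm_ring_1 \<Rightarrow> 'r set \<Rightarrow> 'r set" where
  "pideal_plus x I = {a + b | a b. a \<in> pideal x \<and> b \<in> I}"

definition cozero_vertices :: "'r::comm_ring_1 set" where
  "cozero_vertices = {x. x \<noteq> 0 \<and> \<not> x dvd 1}"

definition cozero_adj :: "'r::comm_ring_1 \<Rightarrow> 'r \<Rightarrow> bool" where
  "cozero_adj x y \<longleftrightarrow> x \<noteq> y \<and> x \<notin> pideal y \<and> y \<notin> pideal x"

definition cozeroI_vertices :: "'r::comm_ring_1 set \<Rightarrow> 'r set" where
  "cozeroI_vertices I = {x. x \<notin> I \<and> pideal_plus x I \<noteq> UNIV}"

definition cozeroI_adj :: "'r::comm_ring_1 set \<Rightarrow> 'r \<Rightarrow> 'r \<Rightarrow> bool" where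
  "cozeroI_adj I x y \<longleftrightarrow> x \<noteq> y \<and> x \<notin> pideal_plus y I \<and> y \<notin> pideal_plus x I"

end

theory Submission
  imports Defs
begin

text \<open>Planarity passes to subgraphs by restricting a drawing.  For every ideal \<open>I\<close>,
  \<open>\<Gamma>''_I(R)\<close> is a subgraph of \<open>\<Gamma>'(R)\<close> because \<open>xR \<subseteq> xR + I\<close>, and for \<open>I = 0\<close> the
  two graphs coincide.\<close>

lemma planar_subgraph:
  assumes "planar V E" and "V' \<subseteq> V"
    and "\<And>x y. x \<in> V' \<Longrightarrow> y \<in> V' \<Longrightarrow> E' x y \<Longrightarrow> E x y"
  shows "planar V' E'"
proof -
  obtain p :: "'a \<Rightarrow> real^2" and \<gamma> :: "'a \<Rightarrow> 'a \<Rightarrow> real \<Rightarrow> real^2" where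
    inj: "inj_on p V" and
    arcs: "\<forall>x\<in>V. \<forall>y\<in>V. E x y \<longrightarrow>
          arc (\<gamma> x y) \<and> pathstart (\<gamma> x y) = p x \<and> pathfinish (\<gamma> x y) = p y \<and>
          \<gamma> y x = reversepath (\<gamma> x y) \<and>
          path_image (\<gamma> x y) \<inter> p ` V \<subseteq> {p x, p y}" and
    crossings: "\<forall>x\<in>V. \<forall>y\<in>V. \<forall>u\<in>V. \<forall>v\<in>V. E x y \<and> E u v \<and> {x, y} \<noteq> {u, v} \<longrightarrow>
          path_image (\<gamma> x y) \<inter> path_image (\<gamma> u v) \<subseteq> p ` ({x, y} \<inter> {u, v})"
    using assms(1) unfolding planar_def by (elim exE conjE) (rule that)
  have "inj_on p V'"
    using inj assms(2) by (rule inj_on_subset)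
  moreover have "\<forall>x\<in>V'. \<forall>y\<in>V'. E' x y \<longrightarrow>
          arc (\<gamma> x y) \<and> pathstart (\<gamma> x y) = p x \<and> pathfinish (\<gamma> x y) = p y \<and>
          \<gamma> y x = reversepath (\<gamma> x y) \<and>
          path_image (\<gamma> x y) \<inter> p ` V' \<subseteq> {p x, p y}"
  proof (intro ballI impI)
    fix x y assume "x \<in> V'" "y \<in> V'" "E' x y"
    then have "x \<in> V" "y \<in> V" "E x y"
      using assms(2,3) by auto
    moreover have "p ` V' \<subseteq> p ` V"
      using assms(2) by (rule image_mono)
    ultimately show "arc (\<gamma> x y) \<and> pathstart (\<gamma> x y) = p x \<and> pathfinish (\<gamma> x y) = p y \<and>
          \<gamma> y x = reversepath (\<gamma> x y) \<and>
          path_image (\<gamma> x y) \<inter> p ` V' \<subseteq> {p x, p y}"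
      using arcs by blast
  qed
  moreover have "\<forall>x\<in>V'. \<forall>y\<in>V'. \<forall>u\<in>V'. \<forall>v\<in>V'. E' x y \<and> E' u v \<and> {x, y} \<noteq> {u, v} \<longrightarrow>
          path_image (\<gamma> x y) \<inter> path_image (\<gamma> u v) \<subseteq> p ` ({x, y} \<inter> {u, v})"
    using crossings assms(2,3) by (meson subsetD)
  ultimately show ?thesis
    unfolding planar_def by (intro exI[of _ p] exI[of _ \<gamma>] conjI)
qed

lemma is_ideal_zero: "is_ideal {0}"
  unfolding is_ideal_def by simp

lemma zero_mem_ideal: "is_ideal I \<Longrightarrow> 0 \<in> I"
  unfolding is_ideal_def by blast

lemma pideal_subset_pideal_plus:
  assumes "0 \<in> I"
  shows "pideal x \<subseteq> pideal_plus x I"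
  using assms unfolding pideal_plus_def by force

lemma pideal_plus_zero [simp]: "pideal_plus x {0} = pideal x"
  unfolding pideal_plus_def by simp

lemma pideal_eq_UNIV_iff: "pideal x = UNIV \<longleftrightarrow> x dvd 1"
proof
  assume "pideal x = UNIV"
  then have "1 \<in> pideal x" by simp
  then obtain r where "1 = x * r"
    unfolding pideal_def by auto
  then show "x dvd 1" ..
next
  assume "x dvd 1"
  then obtain k where "1 = x * k" ..
  then have "z = x * (k * z)" for z
    by (simp add: mult.assoc [symmetric])
  then show "pideal x = UNIV"
    unfolding pideal_def by auto
qed

lemma cozeroI_vertices_subset_cozero_vertices:
  assumes "is_ideal I"
  shows "cozeroI_vertices I \<subseteq> cozero_vertices"
proof
  fix x assume x: "x \<in> cozeroI_vertices I"
  have "0 \<in> I"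
    using assms by (rule zero_mem_ideal)
  then have "pideal x \<noteq> UNIV"
    using x pideal_subset_pideal_plus [of I x] unfolding cozeroI_vertices_def by auto
  moreover have "x \<noteq> 0"
    using x \<open>0 \<in> I\<close> unfolding cozeroI_vertices_def by auto
  ultimately show "x \<in> cozero_vertices"
    unfolding cozero_vertices_def by (simp add: pideal_eq_UNIV_iff)
qed

lemma cozeroI_adj_imp_cozero_adj:
  assumes "is_ideal I" and "cozeroI_adj I x y"
  shows "cozero_adj x y"
  using assms(2) pideal_subset_pideal_plus [OF zero_mem_ideal [OF assms(1)]]
  unfolding cozeroI_adj_def cozero_adj_def by blast

lemma cozeroI_vertices_zero: "cozeroI_vertices {0} = cozero_vertices"
  unfolding cozeroI_vertices_def cozero_vertices_def by (auto simp: pideal_eq_UNIV_iff)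

lemma cozeroI_adj_zero: "cozeroI_adj {0} = cozero_adj"
  unfolding cozeroI_adj_def cozero_adj_def by (simp add: fun_eq_iff)

theorem proposition3p1:
  shows "planar (cozero_vertices :: 'r::comm_ring_1 set) cozero_adj \<longleftrightarrow>
         (\<forall>I :: 'r set. is_ideal I \<longrightarrow> planar (cozeroI_vertices I) (cozeroI_adj I))"
proof
  assume planar: "planar (cozero_vertices :: 'r set) cozero_adj"
  show "\<forall>I :: 'r set. is_ideal I \<longrightarrow> planar (cozeroI_vertices I) (cozeroI_adj I)"
  proof (intro allI impI)
    fix I :: "'r set" assume "is_ideal I"
    show "planar (cozeroI_vertices I) (cozeroI_adj I)"
      by (rule planar_subgraph [OF planar cozeroI_vertices_subset_cozero_vertices])
        (use \<open>is_ideal I\<close> in \<open>auto intro: cozeroI_adj_imp_cozero_adj\<close>)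
  qed
next
  assume "\<forall>I :: 'r set. is_ideal I \<longrightarrow> planar (cozeroI_vertices I) (cozeroI_adj I)"
  then have "planar (cozeroI_vertices {0 :: 'r}) (cozeroI_adj {0})"
    using is_ideal_zero by blast
  then show "planar (cozero_vertices :: 'r set) cozero_adj"
    by (simp only: cozeroI_vertices_zero cozeroI_adj_zero)
qed

end
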